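(* Let $A=\mathbb{C}[x,y,z]$, let $a\in A\setminus\mathbb{C}$ and equip $A$ with the exact Poisson bracket $\{x,y\}=a_z$, $\{y,z\}=a_x$, $\{z,x\}=a_y$. Then the Poisson prime ideals of $A$ are exactly: $0$; the residually null Poisson prime ideals; and the height one prime ideals $pA$ where $p$ is an irreducible factor in $A$ of $a-\mu$ for some $\mu\in\mathbb{C}$.
   Context: Subscripts denote partial derivatives. A Poisson prime ideal is a prime ideal $P$ with $\{b,P\}\subseteq P$ for all $b\in A$. A Poisson ideal $I$ is residually null if the induced bracket on $A/I$ is zero (equivalently $a_x,a_y,a_z\in I$). *)

theory Defs
  imports "HOL-Computational_Algebra.Computational_Algebra"
begin

text \<open>The polynomial ring A = C[x,y,z] is modelled as iterated univariate
polynomials C[x][y][z]: an element of type complex poly poly poly is a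
polynomial in z whose coefficients are polynomials in y whose coefficients
are polynomials in x.\<close>

type_synonym A3 = "complex poly poly poly"

definition cst :: "complex \<Rightarrow> A3" where
  "cst c = [:[:[:c:]:]:]"

definition varX :: A3 where "varX = [:[:[:0, 1:]:]:]"
definition varY :: A3 where "varY = [:[:0, 1:]:]"
definition varZ :: A3 where "varZ = [:0, 1:]"

definition dX :: "A3 \<Rightarrow> A3" where "dX f = map_poly (map_poly pderiv) f"
definition dY :: "A3 \<Rightarrow> A3" where "dY f = map_poly pderiv f"
definition dZ :: "A3 \<Rightarrow> A3" where "dZ f = pderiv f"

text \<open>The exact Poisson bracket with potential a:
  {x,y} = a_z, {y,z} = a_x, {z,x} = a_y, extended as a biderivation.\<close>
definition pbr :: "A3 \<Rightarrow> A3 \<Rightarrow> A3 \<Rightarrow> A3" where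
  "pbr a f g =
     (dX f * dY g - dY f * dX g) * dZ a
   + (dY f * dZ g - dZ f * dY g) * dX a
   + (dZ f * dX g - dX f * dZ g) * dY a"

definition is_ideal :: "A3 set \<Rightarrow> bool" where
  "is_ideal I \<longleftrightarrow> 0 \<in> I \<and> (\<forall>u\<in>I. \<forall>v\<in>I. u + v \<in> I) \<and> (\<forall>r. \<forall>u\<in>I. r * u \<in> I)"

definition is_prime_ideal :: "A3 set \<Rightarrow> bool" where
  "is_prime_ideal P \<longleftrightarrow> is_ideal P \<and> P \<noteq> UNIV \<and> (\<forall>u v. u * v \<in> P \<longrightarrow> u \<in> P \<or> v \<in> P)"

definition poisson_ideal :: "A3 \<Rightarrow> A3 set \<Rightarrow> bool" where
  "poisson_ideal a I \<longleftrightarrow> is_ideal I \<and> (\<forall>b. \<forall>u\<in>I. pbr a b u \<in> I)"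

definition poisson_prime :: "A3 \<Rightarrow> A3 set \<Rightarrow> bool" where
  "poisson_prime a P \<longleftrightarrow> is_prime_ideal P \<and> (\<forall>b. \<forall>u\<in>P. pbr a b u \<in> P)"

definition residually_null :: "A3 \<Rightarrow> A3 set \<Rightarrow> bool" where
  "residually_null a I \<longleftrightarrow> poisson_ideal a I \<and> (\<forall>f g. pbr a f g \<in> I)"

definition principal :: "A3 \<Rightarrow> A3 set" where
  "principal p = {p * r | r. True}"

end

theory Submission
  imports Defs "HOL-Computational_Algebra.Field_as_Ring"
begin

(* Let P \<noteq> 0 be a Poisson prime that is not residually null. Bracketing with x, y, z
   turns a partial derivative of a lying outside P into closure of P under d/dz (and under
   d/dy when P meets C[x]). A least-degree argument in the first variable in which P meets
   C[x] \<subset> C[x,y] \<subset> A nontrivially then shows P = pA for a prime p, and the Poisson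
   condition for p reads p | D(g) p' - g' D(p) for the partial derivatives D of the coefficient
   ring, with g = a or its constant term in z. Among the nonzero F with p | F(g) (they exist
   since g is algebraic modulo p), one of least degree has coefficients killed by every D,
   hence complex coefficients; F splits over C, so p divides g - \<mu> for a root \<mu>. *)

section \<open>Derivations and Jacobians of polynomials\<close>

definition is_derivation :: "('a::comm_ring_1 \<Rightarrow> 'a) \<Rightarrow> bool" where
  "is_derivation D \<longleftrightarrow> (\<forall>x y. D (x + y) = D x + D y) \<and> (\<forall>x y. D (x * y) = D x * y + x * D y)"

lemma derivation_add: "is_derivation D \<Longrightarrow> D (x + y) = D x + D y"
  by (simp add: is_derivation_def)

lemma derivation_mult: "is_derivation D \<Longrightarrow> D (x * y) = D x * y + x * D y"
  by (simp add: is_derivation_def)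

lemma derivation_0: "is_derivation D \<Longrightarrow> D 0 = 0"
  using derivation_add[of D 0 0] by simp

lemma derivation_diff: "is_derivation D \<Longrightarrow> D (x - y) = D x - D y"
  using derivation_add[of D "x - y" y] by (simp add: eq_diff_eq)

lemma derivation_pderiv: "is_derivation (pderiv :: 'a::idom poly \<Rightarrow> 'a poly)"
  by (simp add: is_derivation_def pderiv_add pderiv_mult)

lemma map_poly_derivation_add:
  "is_derivation D \<Longrightarrow> map_poly D (p + q) = map_poly D p + map_poly D q"
  by (rule poly_eqI) (simp add: coeff_map_poly derivation_0 derivation_add)

lemma map_poly_derivation_const: "is_derivation D \<Longrightarrow> map_poly D [:c:] = [:D c:]"
  by (simp add: map_poly_pCons derivation_0)

lemma map_poly_derivation_mult:
  assumes D: "is_derivation D"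
  shows "map_poly D (p * q) = map_poly D p * q + p * map_poly D q"
proof (induction p)
  case 0
  then show ?case by simp
next
  case (pCons c p)
  have smult: "map_poly D (smult c q) = smult (D c) q + smult c (map_poly D q)"
    by (rule poly_eqI) (simp add: coeff_map_poly derivation_0[OF D] derivation_mult[OF D])
  have "map_poly D (pCons c p * q) = map_poly D (smult c q + pCons 0 (p * q))"
    by simp
  also have "\<dots> = smult (D c) q + smult c (map_poly D q) + pCons 0 (map_poly D p * q + p * map_poly D q)"
    using D pCons.IH by (simp add: map_poly_derivation_add smult map_poly_pCons derivation_0)
  also have "\<dots> = map_poly D (pCons c p) * q + pCons c p * map_poly D q"
    using D by (simp add: map_poly_pCons derivation_0 algebra_simps)
  finally show ?case .
qed

lemma derivation_map_poly: "is_derivation D \<Longrightarrow> is_derivation (map_poly D)"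
  by (simp add: is_derivation_def map_poly_derivation_add map_poly_derivation_mult)

lemma map_poly_derivation_pcompose:
  assumes D: "is_derivation D"
  shows "map_poly D (pcompose F g) = pcompose (map_poly D F) g + pcompose (pderiv F) g * map_poly D g"
proof (induction F)
  case 0
  then show ?case using D by (simp add: derivation_0)
next
  case (pCons c F)
  have "map_poly D (pcompose (pCons c F) g) = [:D c:] + map_poly D g * pcompose F g
      + g * (pcompose (map_poly D F) g + pcompose (pderiv F) g * map_poly D g)"
    using D pCons.IH
    by (simp add: pcompose_pCons map_poly_derivation_add map_poly_derivation_mult map_poly_derivation_const)
  also have "\<dots> = pcompose (map_poly D (pCons c F)) g + pcompose (pderiv (pCons c F)) g * map_poly D g"
    using D by (simp add: map_poly_pCons derivation_0 pcompose_pCons pderiv_pCons pcompose_add algebra_simps)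
  finally show ?case .
qed

definition jacobian :: "('a::idom \<Rightarrow> 'a) \<Rightarrow> 'a poly \<Rightarrow> 'a poly \<Rightarrow> 'a poly" where
  "jacobian D f g = map_poly D f * pderiv g - pderiv f * map_poly D g"

lemma jacobian_mult_left:
  "is_derivation D \<Longrightarrow> jacobian D (p * h) p = p * jacobian D h p"
  by (simp add: jacobian_def map_poly_derivation_mult pderiv_mult algebra_simps)

lemma jacobian_pcompose:
  "is_derivation D \<Longrightarrow> jacobian D (pcompose F g) p
     = pcompose (map_poly D F) g * pderiv p + pcompose (pderiv F) g * jacobian D g p"
  by (simp add: jacobian_def map_poly_derivation_pcompose pderiv_pcompose algebra_simps)

lemma prime_dvd_pcompose_map_poly_derivation:
  fixes p :: "'a::{idom,ring_char_0} poly"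
  assumes D: "is_derivation D" and p: "prime_elem p" "degree p > 0"
    and jac: "p dvd jacobian D g p" and F: "p dvd pcompose F g"
  shows "p dvd pcompose (map_poly D F) g"
proof -
  from F obtain h where "pcompose F g = p * h" by (elim dvdE)
  then have "p dvd jacobian D (pcompose F g) p"
    by (simp add: jacobian_mult_left[OF D])
  moreover have "p dvd pcompose (pderiv F) g * jacobian D g p"
    using jac by simp
  ultimately have "p dvd pcompose (map_poly D F) g * pderiv p"
    by (simp add: jacobian_pcompose[OF D] dvd_add_left_iff)
  then show ?thesis
    using p by (auto dest: prime_elem_dvd_multD)
qed

section \<open>Algebraic relations modulo a polynomial\<close>

lemma polys_of_bounded_degree_dependent:
  fixes q :: "'i \<Rightarrow> 'a::idom poly"
  assumes "finite I" "n < card I" "\<forall>i\<in>I. \<forall>k\<ge>n. coeff (q i) k = 0"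
  shows "\<exists>c. (\<exists>i\<in>I. c i \<noteq> 0) \<and> (\<Sum>i\<in>I. smult (c i) (q i)) = 0"
  using assms
proof (induction n arbitrary: I q)
  case 0
  then obtain i where i: "i \<in> I" by fastforce
  have "q i = 0" using 0 i by (auto intro: poly_eqI)
  then show ?case using i 0(1)
    by (intro exI[of _ "\<lambda>k. if k = i then 1 else 0"]) (auto intro!: sum.neutral)
next
  case (Suc n)
  show ?case
  proof (cases "\<forall>i\<in>I. coeff (q i) n = 0")
    case True
    then have "\<forall>i\<in>I. \<forall>k\<ge>n. coeff (q i) k = 0"
      using Suc.prems(3) by (metis le_eq_less_or_eq Suc_leI)
    then show ?thesis using Suc.IH[of I q] Suc.prems by auto
  next
    case False
    then obtain j where j: "j \<in> I" "coeff (q j) n \<noteq> 0" by auto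
    define l where "l = coeff (q j) n"
    \<comment> \<open>eliminate the coefficient of t^n using q j\<close>
    define q' where "q' i = smult l (q i) - smult (coeff (q i) n) (q j)" for i
    have "\<forall>i\<in>I - {j}. \<forall>k\<ge>n. coeff (q' i) k = 0"
    proof (intro ballI allI impI)
      fix i k assume "i \<in> I - {j}" "n \<le> k"
      then show "coeff (q' i) k = 0"
        using Suc.prems(3) j(1) by (cases "k = n") (auto simp: q'_def l_def)
    qed
    moreover have "n < card (I - {j})" "finite (I - {j})"
      using Suc.prems j by (simp_all add: card_Diff_singleton)
    ultimately obtain c' where c': "\<exists>i\<in>I - {j}. c' i \<noteq> 0" "(\<Sum>i\<in>I - {j}. smult (c' i) (q' i)) = 0"
      using Suc.IH[of "I - {j}" q'] by blast
    define c where "c i = (if i = j then - (\<Sum>k\<in>I - {j}. c' k * coeff (q k) n) else c' i * l)" for i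
    have "(\<Sum>i\<in>I. smult (c i) (q i)) = smult (c j) (q j) + (\<Sum>i\<in>I - {j}. smult (c i) (q i))"
      using Suc.prems(1) j by (simp add: sum.remove)
    also have "(\<Sum>i\<in>I - {j}. smult (c i) (q i)) = (\<Sum>i\<in>I - {j}. smult (c' i * l) (q i))"
      by (rule sum.cong) (auto simp: c_def)
    also have "smult (c j) (q j) = - (\<Sum>k\<in>I - {j}. smult (c' k * coeff (q k) n) (q j))"
      by (simp add: c_def smult_sum)
    also have "- (\<Sum>k\<in>I - {j}. smult (c' k * coeff (q k) n) (q j)) + (\<Sum>i\<in>I - {j}. smult (c' i * l) (q i))
        = (\<Sum>i\<in>I - {j}. smult (c' i) (q' i))"
      by (simp add: q'_def sum_subtractf[symmetric] algebra_simps smult_diff_right sum_negf[symmetric]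
          flip: sum.distrib)
    finally have "(\<Sum>i\<in>I. smult (c i) (q i)) = 0" using c'(2) by simp
    moreover obtain i where "i \<in> I - {j}" "c' i \<noteq> 0" using c'(1) by blast
    then have "c i \<noteq> 0" by (simp add: c_def l_def j)
    ultimately show ?thesis using \<open>i \<in> I - {j}\<close> by blast
  qed
qed

lemma pcompose_x_power: "pcompose ([:0, 1:] ^ j) g = g ^ j"
  by (induction j) (simp_all add: pcompose_mult pcompose_1 pcompose_pCons)

text \<open>The pseudo-remainders of g^0, ..., g^(deg p) modulo p are deg p + 1 polynomials of
  degree below deg p, hence linearly dependent.\<close>

lemma ex_pcompose_dvd:
  fixes p g :: "'a::idom poly"
  assumes "degree p > 0"
  obtains F where "F \<noteq> 0" "p dvd pcompose F g"
proof -
  have p0: "p \<noteq> 0" using assms by auto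
  define r where "r j = pseudo_mod (g ^ j) p" for j
  have "\<forall>j. \<exists>\<alpha> Q. \<alpha> \<noteq> 0 \<and> smult \<alpha> (g ^ j) = p * Q + r j"
    unfolding r_def using pseudo_mod(1)[OF p0] by blast
  then obtain \<alpha> Q where \<alpha>Q: "\<And>j. \<alpha> j \<noteq> 0" "\<And>j. smult (\<alpha> j) (g ^ j) = p * Q j + r j"
    by metis
  have "\<forall>j\<in>{..degree p}. \<forall>k\<ge>degree p. coeff (r j) k = 0"
    using pseudo_mod(2)[OF p0] by (metis r_def coeff_0 coeff_eq_0 order.strict_trans2)
  then obtain c where c: "\<exists>j\<in>{..degree p}. c j \<noteq> 0" "(\<Sum>j\<le>degree p. smult (c j) (r j)) = 0"
    using polys_of_bounded_degree_dependent[of "{..degree p}" "degree p" r] by auto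
  define F where "F = (\<Sum>j\<le>degree p. monom (c j * \<alpha> j) j)"
  have "pcompose F g = (\<Sum>j\<le>degree p. smult (c j) (smult (\<alpha> j) (g ^ j)))"
    unfolding F_def pcompose_sum
    by (rule sum.cong) (simp_all add: monom_altdef pcompose_smult pcompose_x_power)
  also have "\<dots> = p * (\<Sum>j\<le>degree p. smult (c j) (Q j))"
    by (simp add: \<alpha>Q(2) smult_add_right sum.distrib c(2) sum_distrib_left)
  finally have "p dvd pcompose F g" by simp
  moreover obtain j0 where "j0 \<le> degree p" "c j0 \<noteq> 0" using c(1) by blast
  then have "coeff F j0 \<noteq> 0"
    using \<alpha>Q(1)[of j0] by (simp add: F_def coeff_sum coeff_monom)
  then have "F \<noteq> 0" by auto
  ultimately show ?thesis using that by blast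
qed

section \<open>Splitting over the complex numbers\<close>

definition complex_embedding :: "(complex \<Rightarrow> 'a::comm_ring_1) \<Rightarrow> bool" where
  "complex_embedding e \<longleftrightarrow> (\<forall>x y. e (x + y) = e x + e y) \<and> (\<forall>x y. e (x * y) = e x * e y)
     \<and> e 1 = 1 \<and> inj e"

lemma complex_embedding_0: "complex_embedding e \<Longrightarrow> e 0 = 0"
  unfolding complex_embedding_def by (metis add_0 add_cancel_right_right)

lemma complex_embedding_uminus: "complex_embedding e \<Longrightarrow> e (- x) = - e x"
  using complex_embedding_0[of e] unfolding complex_embedding_def
  by (metis add.right_inverse add_eq_0_iff)

lemma map_poly_complex_embedding_mult:
  assumes e: "complex_embedding e"
  shows "map_poly e (H * K) = map_poly e H * map_poly e K"
proof (induction H)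
  case 0
  then show ?case by simp
next
  case (pCons c H)
  have add: "map_poly e (U + V) = map_poly e U + map_poly e V" for U V
    using e by (intro poly_eqI) (simp add: coeff_map_poly complex_embedding_0 complex_embedding_def)
  have "map_poly e (pCons c H * K) = map_poly e (smult c K + pCons 0 (H * K))"
    by simp
  also have "\<dots> = map_poly e (pCons c H) * map_poly e K"
    using e pCons.IH
    by (simp add: add map_poly_smult map_poly_pCons complex_embedding_0 complex_embedding_def)
  finally show ?case .
qed

lemma prime_dvd_sub_const_if_dvd_pcompose:
  fixes p g :: "'a::idom poly"
  assumes e: "complex_embedding e" and p: "prime_elem p" "degree p > 0"
  shows "H \<noteq> 0 \<Longrightarrow> p dvd pcompose (map_poly e H) g \<Longrightarrow> \<exists>\<mu>. p dvd g - [:e \<mu>:]"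
proof (induction "degree H" arbitrary: H rule: less_induct)
  case less
  show ?case
  proof (cases "degree H = 0")
    case True
    then obtain k where H: "H = [:k:]" by (elim degree_eq_zeroE)
    have "e k \<noteq> 0"
      using less.prems(1) e complex_embedding_0[OF e] by (metis H complex_embedding_def injD pCons_eq_0_iff)
    moreover have "p dvd [:e k:]"
      using less.prems(2) by (simp add: H map_poly_pCons complex_embedding_0[OF e])
    ultimately show ?thesis
      using p(2) by (metis dvd_imp_degree_le degree_pCons_0 pCons_eq_0_iff not_gr_zero le_zero_eq)
  next
    case False
    then obtain \<mu> where "poly H \<mu> = 0"
      using fundamental_theorem_of_algebra constant_degree by metis
    then obtain H' where H': "H = [:-\<mu>, 1:] * H'" by (metis poly_eq_0_iff_dvd dvdE)
    have "H' \<noteq> 0" using less.prems(1) H' by auto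
    then have deg: "degree H' < degree H" unfolding H' by (subst degree_mult_eq) auto
    have "map_poly e [:-\<mu>, 1:] = [:- e \<mu>, 1:]"
      using e by (simp add: map_poly_pCons complex_embedding_0 complex_embedding_uminus complex_embedding_def)
    then have "map_poly e H = [:- e \<mu>, 1:] * map_poly e H'"
      by (simp only: H' map_poly_complex_embedding_mult[OF e])
    then have "pcompose (map_poly e H) g = pcompose [:- e \<mu>, 1:] g * pcompose (map_poly e H') g"
      by (simp only: pcompose_mult)
    also have "pcompose [:- e \<mu>, 1:] g = g - [:e \<mu>:]"
      by (simp add: pcompose_pCons algebra_simps)
    finally have "pcompose (map_poly e H) g = (g - [:e \<mu>:]) * pcompose (map_poly e H') g" .
    then have "p dvd g - [:e \<mu>:] \<or> p dvd pcompose (map_poly e H') g"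
      using less.prems(2) p(1) by (metis prime_elem_dvd_multD)
    then show ?thesis using less.hyps[OF deg] \<open>H' \<noteq> 0\<close> by blast
  qed
qed

text \<open>The measure m witnesses that the derivations in Ds can be applied only finitely often
  before reaching the complex constants, which they kill. An annihilator F of g modulo p of
  least degree, and then of least m (lead_coeff F), must therefore be killed by every D.\<close>

lemma ex_const_pcompose_dvd:
  fixes p g :: "'a::{idom,ring_char_0} poly" and m :: "'a \<Rightarrow> nat"
  assumes e: "complex_embedding e"
    and derivation: "\<And>D. D \<in> Ds \<Longrightarrow> is_derivation D"
    and kills_consts: "\<And>D k. D \<in> Ds \<Longrightarrow> D (e k) = 0"
    and descent: "\<And>c. c \<notin> range e \<Longrightarrow> \<exists>D\<in>Ds. D c \<noteq> 0 \<and> m (D c) < m c"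
    and p: "prime_elem p" "degree p > 0"
    and jac: "\<And>D. D \<in> Ds \<Longrightarrow> p dvd jacobian D g p"
  obtains F where "F \<noteq> 0" "p dvd pcompose F g" "\<And>i. coeff F i \<in> range e"
proof -
  define good where "good F \<longleftrightarrow> F \<noteq> 0 \<and> p dvd pcompose F g" for F
  have good_map_poly: "good (map_poly D F)" if "D \<in> Ds" "good F" "map_poly D F \<noteq> 0" for D F
    using prime_dvd_pcompose_map_poly_derivation[OF derivation[OF that(1)] p jac[OF that(1)]] that
    by (simp add: good_def)
  obtain F1 where "good F1" using ex_pcompose_dvd[OF p(2)] good_def by metis
  then obtain F1 where "good F1" and least_degree: "\<And>F. good F \<Longrightarrow> degree F1 \<le> degree F"
    using ex_has_least_nat[of good F1 degree] by blast
  define n where "n = degree F1"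
  obtain F0 where F0: "good F0" "degree F0 = n"
    and least_lead: "\<And>F. good F \<Longrightarrow> degree F = n \<Longrightarrow> m (lead_coeff F0) \<le> m (lead_coeff F)"
    using ex_has_least_nat[of "\<lambda>F. good F \<and> degree F = n" F1 "\<lambda>F. m (lead_coeff F)"] \<open>good F1\<close> n_def
    by blast
  have coeff_D: "coeff (map_poly D F0) i = D (coeff F0 i)" if "D \<in> Ds" for D i
    by (simp add: coeff_map_poly derivation_0[OF derivation[OF that]])
  have degree_D: "degree (map_poly D F0) \<le> n" for D
    using map_poly_degree_leq[of D F0] F0(2) by simp
  have lead_const: "lead_coeff F0 \<in> range e"
  proof (rule ccontr)
    assume "lead_coeff F0 \<notin> range e"
    then obtain D where D: "D \<in> Ds" "D (lead_coeff F0) \<noteq> 0" "m (D (lead_coeff F0)) < m (lead_coeff F0)"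
      using descent by blast
    then have lead_D: "coeff (map_poly D F0) n \<noteq> 0" using coeff_D F0(2) by simp
    then have deg: "degree (map_poly D F0) = n" by (intro antisym degree_D le_degree)
    have "map_poly D F0 \<noteq> 0" using lead_D by auto
    then have "good (map_poly D F0)" using good_map_poly D(1) F0(1) by blast
    then have "m (lead_coeff F0) \<le> m (lead_coeff (map_poly D F0))" using least_lead deg by blast
    also have "lead_coeff (map_poly D F0) = D (lead_coeff F0)" using coeff_D[OF D(1)] deg F0(2) by simp
    finally show False using D(3) by simp
  qed
  have map_poly_D: "map_poly D F0 = 0" if D: "D \<in> Ds" for D
  proof (rule ccontr)
    assume nz: "map_poly D F0 \<noteq> 0"
    have "coeff (map_poly D F0) n = 0"
      using lead_const kills_consts D coeff_D F0(2) by auto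
    then have "degree (map_poly D F0) < n"
      using degree_D nz by (metis le_neq_implies_less leading_coeff_0_iff)
    moreover have "good (map_poly D F0)" using good_map_poly D F0(1) nz by blast
    ultimately show False using least_degree n_def by (meson not_le)
  qed
  have coeffs: "coeff F0 i \<in> range e" for i
  proof (rule ccontr)
    assume "coeff F0 i \<notin> range e"
    then obtain D where "D \<in> Ds" "D (coeff F0 i) \<noteq> 0" using descent by blast
    then show False using map_poly_D coeff_D by (metis coeff_0)
  qed
  then show ?thesis using that F0(1) unfolding good_def by blast
qed

lemma prime_dvd_sub_const_if_jacobians_dvd:
  fixes p g :: "'a::{idom,ring_char_0} poly" and m :: "'a \<Rightarrow> nat"
  assumes e: "complex_embedding e"
    and derivation: "\<And>D. D \<in> Ds \<Longrightarrow> is_derivation D"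
    and kills_consts: "\<And>D k. D \<in> Ds \<Longrightarrow> D (e k) = 0"
    and descent: "\<And>c. c \<notin> range e \<Longrightarrow> \<exists>D\<in>Ds. D c \<noteq> 0 \<and> m (D c) < m c"
    and p: "prime_elem p" "degree p > 0"
    and jac: "\<And>D. D \<in> Ds \<Longrightarrow> p dvd jacobian D g p"
  shows "\<exists>\<mu>. p dvd g - [:e \<mu>:]"
proof -
  obtain F0 where F0: "F0 \<noteq> 0" "p dvd pcompose F0 g" and coeffs: "\<And>i. coeff F0 i \<in> range e"
    using ex_const_pcompose_dvd[of e Ds m p g] assms by blast
  define H where "H = map_poly (inv e) F0"
  have "inv e 0 = 0"
    using e complex_embedding_0[OF e] unfolding complex_embedding_def by (metis inv_f_f)
  then have "map_poly e H = F0"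
    using coeffs complex_embedding_0[OF e] by (intro poly_eqI) (simp add: H_def coeff_map_poly f_inv_into_f)
  then show ?thesis
    using prime_dvd_sub_const_if_dvd_pcompose[OF e p] F0 by (metis map_poly_0)
qed

section \<open>Prime ideals of polynomial rings\<close>

lemma prime_factor_mem:
  fixes M :: "'a::factorial_semiring set"
  assumes prime: "\<And>u v. u * v \<in> M \<Longrightarrow> u \<in> M \<or> v \<in> M"
    and mult: "\<And>u r. u \<in> M \<Longrightarrow> r * u \<in> M"
    and one: "1 \<notin> M" and w: "w \<in> M" "w \<noteq> 0"
  obtains q where "prime q" "q dvd w" "q \<in> M"
proof -
  obtain A where A: "\<And>q. q \<in># A \<Longrightarrow> prime q" "normalize (prod_mset A) = normalize w"
    using prime_factorization_exists'[OF w(2)] by blast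
  then have "w dvd prod_mset A" "prod_mset A dvd w"
    by (metis dvd_normalize_iff normalize_dvd_iff dvd_refl)+
  then have "prod_mset A \<in> M" using mult[OF w(1)] by (auto elim: dvdE simp: mult.commute)
  moreover have "\<exists>q. q \<in># B \<and> q \<in> M" if "prod_mset B \<in> M" for B
    using that by (induction B) (use one prime in auto)
  ultimately obtain q where "q \<in># A" "q \<in> M" by blast
  then show ?thesis
    using that A(1) dvd_trans[OF dvd_prod_mset \<open>prod_mset A dvd w\<close>] by blast
qed

text \<open>Pseudo-division by a prime element of least degree leaves a remainder of smaller
  degree in M, hence zero.\<close>

lemma prime_generator_of_least_degree:
  fixes M :: "'a::{factorial_ring_gcd,semiring_gcd_mult_normalize} poly set"
  assumes diff: "\<And>u v. u \<in> M \<Longrightarrow> v \<in> M \<Longrightarrow> u - v \<in> M"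
    and mult: "\<And>u r. u \<in> M \<Longrightarrow> r * u \<in> M"
    and prime: "\<And>u v. u * v \<in> M \<Longrightarrow> u \<in> M \<or> v \<in> M"
    and one: "1 \<notin> M"
    and no_const: "\<And>c. c \<noteq> 0 \<Longrightarrow> [:c:] \<notin> M"
    and w: "w \<in> M" "w \<noteq> 0"
  obtains s where "prime s" "degree s > 0" "M = {u. s dvd u}"
proof -
  obtain t where t: "t \<in> M" "t \<noteq> 0" and least: "\<And>u. u \<in> M \<Longrightarrow> u \<noteq> 0 \<Longrightarrow> degree t \<le> degree u"
    using ex_has_least_nat[of "\<lambda>u. u \<in> M \<and> u \<noteq> 0" w degree] w by blast
  obtain s where s: "prime s" "s dvd t" "s \<in> M"
    using prime_factor_mem[of M, OF prime mult one t] by blast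
  have s0: "s \<noteq> 0" using s(1) by auto
  have least_s: "degree s \<le> degree u" if "u \<in> M" "u \<noteq> 0" for u
    using dvd_imp_degree_le[OF s(2) t(2)] least[OF that] by simp
  have deg_s: "degree s > 0"
  proof (rule ccontr)
    assume "\<not> degree s > 0"
    then have "s = [:coeff s 0:]" by (metis degree_eq_zeroE coeff_pCons_0 neq0_conv)
    then show False using no_const s(3) s0 by (metis pCons_eq_0_iff)
  qed
  have "s dvd u" if u: "u \<in> M" for u
  proof -
    obtain \<alpha> q where \<alpha>q: "\<alpha> \<noteq> 0" "smult \<alpha> u = s * q + pseudo_mod u s"
      using pseudo_mod(1)[OF s0] by blast
    have "[:\<alpha>:] * u - q * s \<in> M" using diff mult u s(3) by blast
    then have "pseudo_mod u s \<in> M" using \<alpha>q(2) by (simp add: algebra_simps)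
    then have "pseudo_mod u s = 0" using pseudo_mod(2)[OF s0, of u] least_s by fastforce
    then have "s dvd [:\<alpha>:] * u" using \<alpha>q(2) by simp
    moreover have "\<not> s dvd [:\<alpha>:]"
      using \<alpha>q(1) deg_s dvd_imp_degree_le[of s "[:\<alpha>:]"] by auto
    ultimately show ?thesis using s(1) by (metis prime_dvd_multD)
  qed
  moreover have "u \<in> M" if "s dvd u" for u
    using that mult[OF s(3)] by (auto elim: dvdE simp: mult.commute)
  ultimately show ?thesis using that s(1) deg_s by blast
qed

lemma derivation_dX: "is_derivation dX"
  unfolding dX_def[abs_def] by (intro derivation_map_poly derivation_pderiv)

lemma derivation_dY: "is_derivation dY"
  unfolding dY_def[abs_def] by (intro derivation_map_poly derivation_pderiv)

lemma derivation_dZ: "is_derivation dZ"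
  unfolding dZ_def[abs_def] by (rule derivation_pderiv)

lemmas dX_mult = derivation_mult[OF derivation_dX] and dY_mult = derivation_mult[OF derivation_dY]
  and dZ_mult = derivation_mult[OF derivation_dZ]
lemmas dX_diff = derivation_diff[OF derivation_dX] and dY_diff = derivation_diff[OF derivation_dY]
  and dZ_diff = derivation_diff[OF derivation_dZ]

lemma dX_const: "dX [:r:] = [:map_poly pderiv r:]"
  by (simp add: dX_def map_poly_pCons)

lemma dY_const: "dY [:r:] = [:pderiv r:]"
  by (simp add: dY_def map_poly_pCons)

lemma dZ_const [simp]: "dZ [:r:] = 0"
  by (simp add: dZ_def)

lemma coeff_dX: "coeff (dX w) i = map_poly pderiv (coeff w i)"
  by (simp add: dX_def coeff_map_poly)

lemma coeff_dY: "coeff (dY w) i = pderiv (coeff w i)"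
  by (simp add: dY_def coeff_map_poly)

lemma dX_cst [simp]: "dX (cst c) = 0" and dY_cst [simp]: "dY (cst c) = 0"
  by (simp_all add: dX_def dY_def cst_def map_poly_pCons)

lemma dZ_cst [simp]: "dZ (cst c) = 0"
  by (simp add: cst_def)

lemma dX_varX [simp]: "dX varX = 1" and dY_varX [simp]: "dY varX = 0" and dZ_varX [simp]: "dZ varX = 0"
  by (simp_all add: dX_def dY_def dZ_def varX_def map_poly_pCons one_pCons pderiv_pCons)

lemma dX_varY [simp]: "dX varY = 0" and dY_varY [simp]: "dY varY = 1" and dZ_varY [simp]: "dZ varY = 0"
  by (simp_all add: dX_def dY_def dZ_def varY_def map_poly_pCons one_pCons pderiv_pCons)

lemma dX_varZ [simp]: "dX varZ = 0" and dY_varZ [simp]: "dY varZ = 0" and dZ_varZ [simp]: "dZ varZ = 1"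
  by (simp_all add: dX_def dY_def dZ_def varZ_def map_poly_pCons one_pCons pderiv_pCons map_poly_1)

lemma is_unit_cst: "k \<noteq> 0 \<Longrightarrow> is_unit (cst k)"
  by (simp add: cst_def is_unit_const_poly_iff dvd_field_iff)

lemma is_unit_of_nat_Suc: "is_unit (of_nat (Suc n) :: complex poly poly)" "is_unit (of_nat (Suc n) :: A3)"
  by (simp_all add: of_nat_poly is_unit_const_poly_iff dvd_field_iff del: of_nat_Suc)

lemma pbr_diff_right: "pbr a b (u - v) = pbr a b u - pbr a b v"
  by (simp add: pbr_def dX_diff dY_diff dZ_diff algebra_simps)

lemma pbr_mult_right: "pbr a b (u * v) = pbr a b u * v + u * pbr a b v"
  by (simp add: pbr_def dX_mult dY_mult dZ_mult algebra_simps)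

lemma pbr_power_right: "pbr a b (u ^ Suc n) = of_nat (Suc n) * u ^ n * pbr a b u"
  by (induction n) (simp_all add: pbr_mult_right algebra_simps)

lemma pbr_0_right [simp]: "pbr a b 0 = 0"
  by (simp add: pbr_def dX_def dY_def dZ_def)

lemma pbr_cst_right [simp]: "pbr a b (cst c) = 0"
  by (simp add: pbr_def)

lemma pbr_potential: "pbr a b a = 0"
  by (simp add: pbr_def algebra_simps)

lemma jacobian_pderiv_eq_dY_dZ: "jacobian pderiv f w = dY f * dZ w - dZ f * dY w"
  by (simp add: jacobian_def dY_def dZ_def)

lemma jacobian_map_poly_pderiv_eq_dX_dZ: "jacobian (map_poly pderiv) f w = dX f * dZ w - dZ f * dX w"
  by (simp add: jacobian_def dX_def dZ_def)

lemma pbr_varX: "pbr a varX w = - jacobian pderiv a w"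
  by (simp add: pbr_def jacobian_pderiv_eq_dY_dZ algebra_simps)

lemma pbr_varY: "pbr a varY w = jacobian (map_poly pderiv) a w"
  by (simp add: pbr_def jacobian_map_poly_pderiv_eq_dX_dZ algebra_simps)

lemma pbr_varZ: "pbr a varZ w = dY a * dX w - dX a * dY w"
  by (simp add: pbr_def algebra_simps)

lemma ideal_0: "is_ideal I \<Longrightarrow> 0 \<in> I"
  by (simp add: is_ideal_def)

lemma ideal_add: "is_ideal I \<Longrightarrow> u \<in> I \<Longrightarrow> v \<in> I \<Longrightarrow> u + v \<in> I"
  by (simp add: is_ideal_def)

lemma ideal_mult_left: "is_ideal I \<Longrightarrow> u \<in> I \<Longrightarrow> r * u \<in> I"
  by (simp add: is_ideal_def)

lemma ideal_mult_right: "is_ideal I \<Longrightarrow> u \<in> I \<Longrightarrow> u * r \<in> I"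
  by (simp add: is_ideal_def mult.commute)

lemma ideal_uminus: "is_ideal I \<Longrightarrow> u \<in> I \<Longrightarrow> - u \<in> I"
  using ideal_mult_left[of I u "- 1"] by simp

lemma ideal_diff: "is_ideal I \<Longrightarrow> u \<in> I \<Longrightarrow> v \<in> I \<Longrightarrow> u - v \<in> I"
  using ideal_add[of I u "- v"] ideal_uminus[of I v] by simp

lemma ideal_dvd: "is_ideal I \<Longrightarrow> u \<in> I \<Longrightarrow> u dvd v \<Longrightarrow> v \<in> I"
  by (auto elim!: dvdE intro: ideal_mult_right)

lemma ideal_eq_UNIV_if_unit: "is_ideal I \<Longrightarrow> is_unit u \<Longrightarrow> u \<in> I \<Longrightarrow> I = UNIV"
  using ideal_dvd[of I u] unit_imp_dvd by blast

lemma ideal_unit_mult_cancel: "is_ideal I \<Longrightarrow> is_unit u \<Longrightarrow> u * v \<in> I \<Longrightarrow> v \<in> I"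
  using ideal_dvd[of I "u * v" v] by (simp add: mult_unit_dvd_iff')

lemma principal_eq: "principal p = {w. p dvd w}"
  by (auto simp: principal_def dvd_def)

lemma ideal_mem_if_coeffs_mem: "is_ideal I \<Longrightarrow> (\<And>i. [:coeff w i:] \<in> I) \<Longrightarrow> w \<in> I"
proof (induction w)
  case 0
  then show ?case by (simp add: ideal_0)
next
  case (pCons c w)
  have "w \<in> I" using pCons.prems by (intro pCons.IH) (simp_all, metis coeff_pCons_Suc)
  then have "[:c:] + varZ * w \<in> I"
    using pCons.prems by (metis ideal_add ideal_mult_left coeff_pCons_0)
  then show ?case by (simp add: varZ_def)
qed

lemma coeff_mem_if_dZ_closed:
  assumes I: "is_ideal I" and closed: "\<And>w. w \<in> I \<Longrightarrow> dZ w \<in> I"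
  shows "w \<in> I \<Longrightarrow> [:coeff w i:] \<in> I"
proof (induction "degree w" arbitrary: w i rule: less_induct)
  case less
  show ?case
  proof (cases "degree w = 0")
    case True
    then obtain c where "w = [:c:]" by (elim degree_eq_zeroE)
    then show ?thesis using less.prems I by (cases i) (simp_all add: ideal_0)
  next
    case False
    then have "degree (dZ w) < degree w" by (simp add: dZ_def degree_pderiv)
    then have "[:coeff (dZ w) j:] \<in> I" for j using less.hyps[OF _ closed[OF less.prems]] by blast
    moreover have "[:of_nat (Suc j) * r:] = (of_nat (Suc j) :: A3) * [:r:]" for j r
      by (simp add: of_nat_poly del: of_nat_Suc)
    ultimately have "of_nat (Suc j) * [:coeff w (Suc j):] \<in> I" for j
      by (simp only: dZ_def coeff_pderiv)
    then have higher: "[:coeff w (Suc j):] \<in> I" for j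
      using ideal_unit_mult_cancel[OF I is_unit_of_nat_Suc(2)] by blast
    obtain c w' where w: "w = pCons c w'" by (cases w)
    have "[:coeff w' j:] \<in> I" for j using higher[of j] by (simp add: w)
    then have "w' \<in> I" by (rule ideal_mem_if_coeffs_mem[OF I])
    then have "w - varZ * w' \<in> I" using less.prems by (simp add: I ideal_diff ideal_mult_left)
    then have "[:c:] \<in> I" by (simp add: w varZ_def)
    then show ?thesis using higher by (cases i) (simp_all add: w)
  qed
qed

lemma ideal_eq_principal_const:
  assumes I: "is_ideal I" and closed: "\<And>w. w \<in> I \<Longrightarrow> dZ w \<in> I"
    and const_mem_iff: "\<And>r. [:r:] \<in> I \<longleftrightarrow> s dvd r"
  shows "I = principal [:s:]"
proof -
  have "w \<in> I \<longleftrightarrow> (\<forall>i. [:coeff w i:] \<in> I)" for w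
    using coeff_mem_if_dZ_closed[OF I closed] ideal_mem_if_coeffs_mem[OF I] by blast
  then show ?thesis by (auto simp: principal_eq const_poly_dvd_iff const_mem_iff)
qed

lemma const_dvd_sub_cst:
  assumes "[:s:] dvd dZ a" "s dvd coeff a 0 - [:[:\<mu>:]:]"
  shows "[:s:] dvd a - cst \<mu>"
proof -
  have "s dvd of_nat (Suc i) * coeff a (Suc i)" for i
    using assms(1) by (simp add: const_poly_dvd_iff dZ_def coeff_pderiv del: of_nat_Suc)
  then have "s dvd coeff a (Suc i)" for i
    using is_unit_of_nat_Suc(1) by (simp add: dvd_mult_unit_iff' del: of_nat_Suc)
  then show ?thesis
    using assms(2) by (simp add: const_poly_dvd_iff cst_def coeff_pCons split: nat.split)
qed

lemma residually_null_iff_partials_mem: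
  assumes I: "poisson_ideal a I"
  shows "residually_null a I \<longleftrightarrow> dX a \<in> I \<and> dY a \<in> I \<and> dZ a \<in> I"
proof
  assume "residually_null a I"
  then have "pbr a varY varZ \<in> I" "pbr a varZ varX \<in> I" "pbr a varX varY \<in> I"
    by (simp_all add: residually_null_def)
  moreover have "pbr a varY varZ = dX a" "pbr a varZ varX = dY a" "pbr a varX varY = dZ a"
    by (simp_all add: pbr_def)
  ultimately show "dX a \<in> I \<and> dY a \<in> I \<and> dZ a \<in> I" by simp
next
  assume partials: "dX a \<in> I \<and> dY a \<in> I \<and> dZ a \<in> I"
  have ideal: "is_ideal I" using I by (simp add: poisson_ideal_def)
  have "pbr a f g \<in> I" for f g
    unfolding pbr_def using partials by (intro ideal_add[OF ideal] ideal_mult_left[OF ideal]) auto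
  then show "residually_null a I" using I by (simp add: residually_null_def)
qed

section \<open>The Poisson prime ideals pA\<close>

lemma poisson_prime_zero: "poisson_prime a {0}"
proof -
  have "(1::A3) \<notin> {0}" by simp
  then have "{0::A3} \<noteq> UNIV" by blast
  then show ?thesis by (simp add: poisson_prime_def is_prime_ideal_def is_ideal_def)
qed

text \<open>Write a - \<mu> = p^(j+1) y with p not dividing y. Then
  0 = {b, a - \<mu>} = p^j ((j+1) {b, p} y + p {b, y}), so p divides {b, p} y, hence {b, p}.\<close>

lemma prime_dvd_pbr_if_dvd_level:
  assumes prime: "prime_elem p" and p: "p dvd a - cst \<mu>" and level0: "a - cst \<mu> \<noteq> 0"
  shows "p dvd pbr a b p"
proof -
  have p0: "p \<noteq> 0" and not_unit: "\<not> is_unit p" using prime by (auto simp: prime_elem_def)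
  obtain y where y: "a - cst \<mu> = p ^ multiplicity p (a - cst \<mu>) * y" "\<not> p dvd y"
    using multiplicity_decompose'[OF level0 not_unit] by blast
  have "multiplicity p (a - cst \<mu>) > 0"
    using p level0 not_unit by (simp add: multiplicity_gt_zero_iff)
  then obtain j where j: "multiplicity p (a - cst \<mu>) = Suc j" using gr0_conv_Suc by blast
  have "0 = pbr a b (a - cst \<mu>)" by (simp add: pbr_diff_right pbr_potential)
  also have "\<dots> = p ^ j * (of_nat (Suc j) * (pbr a b p * y) + p * pbr a b y)"
    by (subst y(1), simp only: j pbr_mult_right pbr_power_right) (simp add: algebra_simps)
  finally have "of_nat (Suc j) * (pbr a b p * y) = - (p * pbr a b y)"
    using p0 by (simp add: eq_neg_iff_add_eq_0)
  then have "p dvd pbr a b p * y"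
    using is_unit_of_nat_Suc(2) by (metis dvd_minus_iff dvd_mult_unit_iff' dvd_triv_left)
  then show ?thesis using prime y(2) by (metis prime_elem_dvd_multD)
qed

lemma poisson_prime_principal_factor:
  assumes a: "a \<notin> range cst" and p: "irreducible p" "p dvd a - cst \<mu>"
  shows "poisson_prime a (principal p)"
proof -
  have prime: "prime_elem p" using p(1) irreducible_imp_prime_elem by blast
  have "a - cst \<mu> \<noteq> 0" using a by auto
  note bracket_dvd = prime_dvd_pbr_if_dvd_level[OF prime p(2) this]
  have "pbr a b u \<in> principal p" if u: "u \<in> principal p" for b u
  proof -
    obtain r where "u = p * r" using u by (auto simp: principal_eq elim: dvdE)
    then show ?thesis using bracket_dvd[of b] by (simp add: principal_eq pbr_mult_right)
  qed
  moreover have "is_ideal (principal p)"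
    by (simp add: is_ideal_def principal_eq)
  moreover have "principal p \<noteq> UNIV"
    using prime by (auto simp: principal_eq prime_elem_def)
  moreover have "u \<in> principal p \<or> v \<in> principal p" if "u * v \<in> principal p" for u v
    using prime that by (simp add: principal_eq prime_elem_dvd_mult_iff)
  ultimately show ?thesis by (simp add: poisson_prime_def is_prime_ideal_def)
qed

section \<open>The coefficient rings C[x] and C[x,y]\<close>

definition eval_x :: "complex \<Rightarrow> complex poly poly \<Rightarrow> complex poly poly" where
  "eval_x c r = map_poly (\<lambda>q. [:poly q c:]) r"

lemma coeff_eval_x: "coeff (eval_x c r) i = [:poly (coeff r i) c:]"
  by (simp add: eval_x_def coeff_map_poly)

lemma eval_x_eq_0_iff: "eval_x c r = 0 \<longleftrightarrow> [:[:-c, 1:]:] dvd r"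
proof -
  have "eval_x c r = 0 \<longleftrightarrow> (\<forall>i. coeff (eval_x c r) i = 0)" by (simp add: poly_eq_iff)
  also have "\<dots> \<longleftrightarrow> (\<forall>i. [:-c, 1:] dvd coeff r i)" by (simp add: coeff_eval_x poly_eq_0_iff_dvd)
  finally show ?thesis by (simp add: const_poly_dvd_iff)
qed

lemma dvd_sub_eval_x: "[:[:-c, 1:]:] dvd r - eval_x c r"
  by (simp add: const_poly_dvd_iff coeff_eval_x poly_eq_0_iff_dvd[symmetric])

lemma eval_x_pderiv: "eval_x c (pderiv r) = pderiv (eval_x c r)"
  by (rule poly_eqI) (simp add: coeff_eval_x coeff_pderiv of_nat_poly)

lemma dvd_sub_const_if_dvd_pderiv:
  fixes r :: "complex poly poly"
  assumes "[:[:-c, 1:]:] dvd pderiv r"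
  shows "[:[:-c, 1:]:] dvd r - [:[:poly (coeff r 0) c:]:]"
proof -
  have "pderiv (eval_x c r) = 0"
    using assms by (simp add: eval_x_eq_0_iff flip: eval_x_pderiv)
  then obtain k where "eval_x c r = [:k:]" by (metis degree_eq_zeroE pderiv_eq_0_iff)
  moreover have "coeff (eval_x c r) 0 = [:poly (coeff r 0) c:]" by (rule coeff_eval_x)
  ultimately show ?thesis using dvd_sub_eval_x[of c r] by simp
qed

lemma complex_embedding_const_poly:
  "complex_embedding (\<lambda>k. [:k:])" "complex_embedding (\<lambda>k. [:[:k:]:])"
  by (simp_all add: complex_embedding_def inj_def one_pCons)

lemma pderiv_descent:
  fixes c :: "complex poly"
  assumes "c \<notin> range (\<lambda>k. [:k:])"
  shows "pderiv c \<noteq> 0 \<and> degree (pderiv c) < degree c"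
proof -
  have "degree c \<noteq> 0" using assms by (metis degree_eq_zeroE rangeI)
  then show ?thesis by (simp add: pderiv_eq_0_iff degree_pderiv)
qed

definition bidegree_weight :: "complex poly poly \<Rightarrow> nat" where
  "bidegree_weight c = degree c + (\<Sum>i\<le>degree c. degree (coeff c i))"

lemma bidegree_weight_descent:
  fixes c :: "complex poly poly"
  assumes "c \<notin> range (\<lambda>k. [:[:k:]:])"
  shows "\<exists>D\<in>{map_poly pderiv, pderiv}. D c \<noteq> 0 \<and> bidegree_weight (D c) < bidegree_weight c"
proof (cases "pderiv c = 0")
  case False
  then obtain n where n: "degree c = Suc n" by (metis pderiv_eq_0_iff not0_implies_Suc)
  have "bidegree_weight (pderiv c) = n + (\<Sum>i\<le>n. degree (coeff c (Suc i)))"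
    by (simp add: bidegree_weight_def n degree_pderiv coeff_pderiv of_nat_poly del: of_nat_Suc)
  also have "\<dots> < Suc n + (degree (coeff c 0) + (\<Sum>i\<le>n. degree (coeff c (Suc i))))"
    by simp
  also have "\<dots> = bidegree_weight c"
    by (simp add: bidegree_weight_def n sum.atMost_Suc_shift del: sum.atMost_Suc)
  finally show ?thesis using False by auto
next
  case True
  then obtain c0 where c: "c = [:c0:]" by (metis degree_eq_zeroE pderiv_eq_0_iff)
  then have "c0 \<notin> range (\<lambda>k. [:k:])" using assms by auto
  then have "pderiv c0 \<noteq> 0 \<and> degree (pderiv c0) < degree c0" by (rule pderiv_descent)
  moreover have "map_poly pderiv c = [:pderiv c0:]" by (simp add: c map_poly_pCons)
  ultimately show ?thesis by (auto simp: bidegree_weight_def c)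
qed

section \<open>Classification of Poisson prime ideals\<close>

definition level_factor_ideal :: "A3 \<Rightarrow> A3 set \<Rightarrow> bool" where
  "level_factor_ideal a P \<longleftrightarrow> (\<exists>p \<mu>. irreducible p \<and> p dvd a - cst \<mu> \<and> P = principal p)"

locale poisson_prime_ideal =
  fixes a :: A3 and P :: "A3 set"
  assumes poisson_prime: "poisson_prime a P"
begin

lemma ideal: "is_ideal P"
  using poisson_prime by (simp add: poisson_prime_def is_prime_ideal_def)

lemma prime: "u * v \<in> P \<Longrightarrow> u \<in> P \<or> v \<in> P"
  using poisson_prime by (simp add: poisson_prime_def is_prime_ideal_def)

lemma pbr_mem: "u \<in> P \<Longrightarrow> pbr a b u \<in> P"
  using poisson_prime by (simp add: poisson_prime_def)

lemma poisson_ideal: "poisson_ideal a P"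
  using ideal pbr_mem by (simp add: poisson_ideal_def)

lemma unit_notin: "is_unit u \<Longrightarrow> u \<notin> P"
  using poisson_prime ideal_eq_UNIV_if_unit[OF ideal] by (auto simp: poisson_prime_def is_prime_ideal_def)

lemma mem_if_diff_mem: "x * u - y * v \<in> P \<Longrightarrow> y \<in> P \<Longrightarrow> x \<notin> P \<Longrightarrow> u \<in> P"
  using ideal_add[OF ideal, of "x * u - y * v" "y * v"] ideal_mult_right[OF ideal, of y v] prime
  by auto

lemma dZ_mem_if_dX_notin: "dZ a \<in> P \<Longrightarrow> dX a \<notin> P \<Longrightarrow> w \<in> P \<Longrightarrow> dZ w \<in> P"
  using pbr_mem[of w varY] mem_if_diff_mem by (simp add: pbr_varY jacobian_map_poly_pderiv_eq_dX_dZ)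

lemma dZ_mem_if_dY_notin: "dZ a \<in> P \<Longrightarrow> dY a \<notin> P \<Longrightarrow> w \<in> P \<Longrightarrow> dZ w \<in> P"
  using pbr_mem[of w varX] ideal_uminus[OF ideal] mem_if_diff_mem
  by (fastforce simp: pbr_varX jacobian_pderiv_eq_dY_dZ)

lemma dY_mem_if_dX_notin: "dY a \<in> P \<Longrightarrow> dX a \<notin> P \<Longrightarrow> w \<in> P \<Longrightarrow> dY w \<in> P"
proof -
  assume "dY a \<in> P" "dX a \<notin> P" "w \<in> P"
  moreover have "dX a * dY w - dY a * dX w \<in> P"
    using ideal_uminus[OF ideal pbr_mem[OF \<open>w \<in> P\<close>, of varZ]] by (simp add: pbr_varZ)
  ultimately show "dY w \<in> P" using mem_if_diff_mem by blast
qed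

lemma level_factor_idealI:
  assumes "P = principal p" "p \<noteq> 0" "p dvd a - cst \<mu>"
  shows "level_factor_ideal a P"
proof -
  have "\<not> is_unit p" using assms(1) unit_notin by (simp add: principal_eq)
  then have "prime_elem p" using assms(1,2) prime by (simp add: prime_elem_def principal_eq)
  then show ?thesis using assms by (auto simp: level_factor_ideal_def intro: prime_elem_imp_irreducible)
qed

lemma x_minus_const_mem: "f \<noteq> 0 \<Longrightarrow> [:[:f:]:] \<in> P \<Longrightarrow> \<exists>c. [:[:[:-c, 1:]:]:] \<in> P"
proof (induction "degree f" arbitrary: f rule: less_induct)
  case less
  show ?case
  proof (cases "degree f = 0")
    case True
    then obtain k where "f = [:k:]" by (elim degree_eq_zeroE)
    then have "cst k \<in> P" "k \<noteq> 0" using less.prems by (simp_all add: cst_def)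
    then show ?thesis using unit_notin is_unit_cst by blast
  next
    case False
    then obtain c where "poly f c = 0"
      using fundamental_theorem_of_algebra constant_degree by metis
    then obtain f' where f': "f = [:-c, 1:] * f'" by (metis poly_eq_0_iff_dvd dvdE)
    have "f' \<noteq> 0" using less.prems f' by auto
    then have deg: "degree f' < degree f" unfolding f' by (subst degree_mult_eq) auto
    have "[:[:f:]:] = [:[:[:-c, 1:]:]:] * [:[:f':]:]" using f' by simp
    then have "[:[:[:-c, 1:]:]:] \<in> P \<or> [:[:f':]:] \<in> P" using prime less.prems(2) by metis
    then show ?thesis using less.hyps[OF deg] \<open>f' \<noteq> 0\<close> by blast
  qed
qed

lemma const_coeffs_mem_eq_0:
  assumes closed: "\<And>w. w \<in> P \<Longrightarrow> dY w \<in> P"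
  shows "\<forall>i. \<exists>k. coeff e i = [:k:] \<Longrightarrow> [:e:] \<in> P \<Longrightarrow> e = 0"
proof (induction "degree e" arbitrary: e rule: less_induct)
  case less
  show ?case
  proof (cases "degree e = 0")
    case True
    then obtain k where "e = [:[:k:]:]" using less.prems(1) by (metis degree_eq_zeroE coeff_pCons_0)
    then show ?thesis using less.prems(2) unit_notin is_unit_cst by (auto simp: cst_def)
  next
    case False
    have "\<exists>k. coeff (pderiv e) i = [:k:]" for i
    proof -
      obtain k where "coeff e (Suc i) = [:k:]" using less.prems(1) by blast
      then show ?thesis by (simp add: coeff_pderiv of_nat_poly)
    qed
    moreover have "[:pderiv e:] \<in> P" using closed[OF less.prems(2)] by (simp add: dY_const)
    ultimately have "pderiv e = 0" using less.hyps False by (simp add: degree_pderiv)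
    then show ?thesis using False by (simp add: pderiv_eq_0_iff)
  qed
qed

lemma level_factor_ideal_if_meets_Cx:
  assumes f: "f \<noteq> 0" "[:[:f:]:] \<in> P" and not_null: "\<not> residually_null a P"
  shows "level_factor_ideal a P"
proof -
  obtain c where "[:[:[:-c, 1:]:]:] \<in> P" using x_minus_const_mem f by blast
  define X :: "complex poly poly" where "X = [:[:-c, 1:]:]"
  have XP: "[:X:] \<in> P" using \<open>[:[:[:-c, 1:]:]:] \<in> P\<close> by (simp add: X_def)
  have dX_X: "dX [:X:] = 1" and dY_X: "dY [:X:] = 0"
    by (simp_all add: X_def dX_def dY_def map_poly_pCons pderiv_pCons one_pCons)
  have "- dZ a \<in> P" using pbr_mem[OF XP, of varY] by (simp add: pbr_varY jacobian_map_poly_pderiv_eq_dX_dZ dX_X)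
  then have dZ_a: "dZ a \<in> P" using ideal_uminus[OF ideal] by fastforce
  have dY_a: "dY a \<in> P" using pbr_mem[OF XP, of varZ] by (simp add: pbr_varZ dX_X dY_X)
  have "dX a \<notin> P"
    using not_null dZ_a dY_a residually_null_iff_partials_mem[OF poisson_ideal] by blast
  note closed_Z = dZ_mem_if_dX_notin[OF dZ_a this] and closed_Y = dY_mem_if_dX_notin[OF dY_a this]
  have const_mem_iff: "[:r:] \<in> P \<longleftrightarrow> X dvd r" for r
  proof
    assume r: "[:r:] \<in> P"
    have "[:X:] dvd [:r - eval_x c r:]" using dvd_sub_eval_x[of c r] by (simp add: X_def)
    then have "[:r:] - [:r - eval_x c r:] \<in> P" using ideal_diff[OF ideal r] ideal_dvd[OF ideal XP] by blast
    then have "eval_x c r = 0"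
      using const_coeffs_mem_eq_0[OF closed_Y] by (simp add: coeff_eval_x)
    then show "X dvd r" by (simp add: X_def eval_x_eq_0_iff)
  qed (use ideal_dvd[OF ideal XP] in simp)
  have P: "P = principal [:X:]"
    using ideal_eq_principal_const[OF ideal closed_Z const_mem_iff] .
  have "X dvd coeff (dY a) 0"
    using coeff_mem_if_dZ_closed[OF ideal closed_Z dY_a] const_mem_iff by blast
  then have "X dvd coeff a 0 - [:[:poly (coeff (coeff a 0) 0) c:]:]"
    unfolding X_def by (intro dvd_sub_const_if_dvd_pderiv) (simp add: coeff_dY)
  moreover have "[:X:] dvd dZ a" using P dZ_a by (simp add: principal_eq)
  ultimately have "[:X:] dvd a - cst (poly (coeff (coeff a 0) 0) c)" by (intro const_dvd_sub_cst)
  then show ?thesis using P by (intro level_factor_idealI) (simp_all add: X_def)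
qed

lemma prime_const_generator:
  assumes no_Cx: "\<And>f. f \<noteq> 0 \<Longrightarrow> [:[:f:]:] \<notin> P" and r: "r \<noteq> 0" "[:r:] \<in> P"
  obtains s where "prime s" "degree s > 0" "\<And>r. [:r:] \<in> P \<longleftrightarrow> s dvd r"
proof -
  define Q where "Q = {r. [:r:] \<in> P}"
  have Q_diff: "u - v \<in> Q" if "u \<in> Q" "v \<in> Q" for u v
    using that ideal_diff[OF ideal, of "[:u:]" "[:v:]"] by (simp add: Q_def)
  have Q_mult: "v * u \<in> Q" if "u \<in> Q" for u v
    using that ideal_mult_left[OF ideal, of "[:u:]" "[:v:]"] by (simp add: Q_def mult.commute)
  have Q_prime: "u \<in> Q \<or> v \<in> Q" if "u * v \<in> Q" for u v
    using that prime[of "[:u:]" "[:v:]"] by (simp add: Q_def mult.commute)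
  have Q_one: "1 \<notin> Q" using unit_notin[of 1] by (simp add: Q_def one_pCons[symmetric])
  have Q_no_const: "[:c:] \<notin> Q" if "c \<noteq> 0" for c using no_Cx that by (simp add: Q_def)
  have "r \<in> Q" using r by (simp add: Q_def)
  then obtain s where "prime s" "degree s > 0" "Q = {r. s dvd r}"
    using prime_generator_of_least_degree[OF Q_diff Q_mult Q_prime Q_one Q_no_const] r(1) by blast
  then show ?thesis using that by (auto simp: Q_def set_eq_iff)
qed

lemma level_factor_ideal_if_meets_Cxy:
  assumes no_Cx: "\<And>f. f \<noteq> 0 \<Longrightarrow> [:[:f:]:] \<notin> P"
    and r: "r \<noteq> 0" "[:r:] \<in> P" and not_null: "\<not> residually_null a P"
  shows "level_factor_ideal a P"
proof -
  obtain s where s: "prime s" "degree s > 0" and const_mem_iff: "\<And>r. [:r:] \<in> P \<longleftrightarrow> s dvd r"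
    using prime_const_generator[OF no_Cx r] by blast
  have sP: "[:s:] \<in> P" using const_mem_iff by simp
  have "dZ a * [:pderiv s:] \<in> P"
    using pbr_mem[OF sP, of varX] by (simp add: pbr_varX jacobian_pderiv_eq_dY_dZ dY_const)
  moreover have "[:pderiv s:] \<notin> P" using const_mem_iff s(2) by simp
  ultimately have dZ_a: "dZ a \<in> P" using prime by blast
  have closed_Z: "dZ w \<in> P" if "w \<in> P" for w
    using not_null dZ_a residually_null_iff_partials_mem[OF poisson_ideal]
      dZ_mem_if_dX_notin[OF dZ_a _ that] dZ_mem_if_dY_notin[OF dZ_a _ that] by blast
  have P: "P = principal [:s:]"
    using ideal_eq_principal_const[OF ideal closed_Z const_mem_iff] .
  define g where "g = coeff a 0"
  have "s dvd jacobian pderiv g s"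
  proof -
    have "[:coeff (pbr a varZ [:s:]) 0:] \<in> P"
      using coeff_mem_if_dZ_closed[OF ideal closed_Z pbr_mem[OF sP]] .
    moreover have "coeff (pbr a varZ [:s:]) 0 = - jacobian pderiv g s"
      by (simp add: pbr_varZ dX_const dY_const coeff_dX coeff_dY jacobian_def g_def algebra_simps)
    ultimately show ?thesis using const_mem_iff by simp
  qed
  then obtain \<mu> where "s dvd g - [:[:\<mu>:]:]"
    using prime_dvd_sub_const_if_jacobians_dvd[of "\<lambda>k. [:k:]" "{pderiv}" degree s g]
      complex_embedding_const_poly(1) derivation_pderiv pderiv_descent s by auto
  moreover have "[:s:] dvd dZ a" using P dZ_a by (simp add: principal_eq)
  ultimately have "[:s:] dvd a - cst \<mu>" by (intro const_dvd_sub_cst) (simp_all add: g_def)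
  then show ?thesis using P s(1) by (intro level_factor_idealI) auto
qed

lemma level_factor_ideal_if_avoids_Cxy:
  assumes no_Cxy: "\<And>r. r \<noteq> 0 \<Longrightarrow> [:r:] \<notin> P" and w: "w \<in> P" "w \<noteq> 0"
  shows "level_factor_ideal a P"
proof -
  obtain p where p: "prime p" "degree p > 0" and P: "P = {u. p dvd u}"
    using prime_generator_of_least_degree[of P, OF ideal_diff[OF ideal] ideal_mult_left[OF ideal]
        prime unit_notin[OF one_dvd] no_Cxy w] by blast
  have pP: "p \<in> P" using P by simp
  have "is_derivation D" if "D \<in> {map_poly pderiv, pderiv}" for D :: "complex poly poly \<Rightarrow> _"
    using that derivation_pderiv derivation_map_poly[OF derivation_pderiv] by auto
  moreover have "D [:[:k:]:] = 0" if "D \<in> {map_poly pderiv, pderiv}" for D k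
    using that by (auto simp: map_poly_pCons)
  moreover have "p dvd jacobian D a p" if "D \<in> {map_poly pderiv, pderiv}" for D
    using that pbr_mem[OF pP, of varY] pbr_mem[OF pP, of varX] P by (auto simp: pbr_varX pbr_varY)
  ultimately obtain \<mu> where "p dvd a - [:[:[:\<mu>:]:]:]"
    using prime_dvd_sub_const_if_jacobians_dvd[OF complex_embedding_const_poly(2) _ _
        bidegree_weight_descent] p by blast
  then show ?thesis using P p(1) by (intro level_factor_idealI) (auto simp: cst_def principal_eq)
qed

lemma level_factor_ideal_if_not_residually_null:
  assumes "P \<noteq> {0}" "\<not> residually_null a P"
  shows "level_factor_ideal a P"
proof (cases "\<exists>f. f \<noteq> 0 \<and> [:[:f:]:] \<in> P")
  case True
  then show ?thesis using level_factor_ideal_if_meets_Cx assms(2) by blast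
next
  case no_Cx: False
  show ?thesis
  proof (cases "\<exists>r. r \<noteq> 0 \<and> [:r:] \<in> P")
    case True
    then show ?thesis using level_factor_ideal_if_meets_Cxy no_Cx assms(2) by blast
  next
    case False
    obtain w where "w \<in> P" "w \<noteq> 0" using assms(1) ideal_0[OF ideal] by blast
    then show ?thesis using level_factor_ideal_if_avoids_Cxy False by blast
  qed
qed

end

theorem corollary3p9:
  fixes a :: A3 and P :: "A3 set"
  assumes "a \<notin> range cst"
  shows "poisson_prime a P \<longleftrightarrow>
           P = {0}
         \<or> (poisson_prime a P \<and> residually_null a P)
         \<or> (\<exists>p \<mu>. irreducible p \<and> p dvd (a - cst \<mu>) \<and> P = principal p)"
proof
  assume "poisson_prime a P"
  then interpret poisson_prime_ideal a P by unfold_locales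
  show "P = {0} \<or> (poisson_prime a P \<and> residually_null a P)
      \<or> (\<exists>p \<mu>. irreducible p \<and> p dvd (a - cst \<mu>) \<and> P = principal p)"
    using level_factor_ideal_if_not_residually_null poisson_prime by (auto simp: level_factor_ideal_def)
next
  assume "P = {0} \<or> (poisson_prime a P \<and> residually_null a P)
      \<or> (\<exists>p \<mu>. irreducible p \<and> p dvd (a - cst \<mu>) \<and> P = principal p)"
  then show "poisson_prime a P"
    using poisson_prime_zero poisson_prime_principal_factor[OF assms] by blast
qed

end
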